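(* Let $\mathcal{S} \subseteq 2^{\mathcal{T}_Y}$ be an algebraic closure system which is closed under time shifts. Then there is a theory $\Sigma$ such that $\mathcal{S} = \mathrm{Mod}(\Sigma)$.
   Context: $Y$ is a non-empty finite set of attributes and $\mathcal{T}_Y = \{y^i \mid y \in Y, i \in \mathbb{Z}\}$. For $M \subseteq \mathcal{T}_Y$ and $j \in \mathbb{Z}$, $M + j = \{y^{i+j} \mid y^i \in M\}$. A closure system on $\mathcal{T}_Y$ is a family closed under arbitrary intersections; it induces the closure operator $\mathrm{C}_\mathcal{S}(M) = \bigcap\{N \in \mathcal{S} \mid M \subseteq N\}$. It is algebraic if $\mathrm{C}_\mathcal{S}(M) = \bigcup\{\mathrm{C}_\mathcal{S}(B) \mid B \subseteq M, B \text{ finite}\}$ for all $M$. $\mathcal{S}$ is closed under time shifts if $M+i \in \mathcal{S}$ for all $M \in \mathcal{S}$, $i \in \mathbb{Z}$. A formula is $A \Rightarrow B$ with $A,B$ finite subsets of $\mathcal{T}_Y$; $M \models A \Rightarrow B$ means that for every $i \in \mathbb{Z}$, $A+i \subseteq M$ implies $B+i \subseteq M$. A theory is a set of formulas and $\mathrm{Mod}(\Sigma)$ is the set of all $M \subseteq \mathcal{T}_Y$ in which all formulas of $\Sigma$ are true. *)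

theory Defs
  imports Main
begin

(* Attributes: a finite (automatically nonempty) type 'y.
   Time-stamped attributes y^i are pairs (y, i) :: 'y \<times> int, so T_Y = UNIV. *)
type_synonym 'y tattr = "'y \<times> int"

definition shift :: "'y tattr set \<Rightarrow> int \<Rightarrow> 'y tattr set" where
  "shift M j = {(y, i + j) | y i. (y, i) \<in> M}"

definition closure_system :: "'y tattr set set \<Rightarrow> bool" where
  "closure_system S \<longleftrightarrow> (\<forall>F \<subseteq> S. \<Inter>F \<in> S)"

definition clo :: "'y tattr set set \<Rightarrow> 'y tattr set \<Rightarrow> 'y tattr set" where
  "clo S M = \<Inter>{N \<in> S. M \<subseteq> N}"

definition algebraic :: "'y tattr set set \<Rightarrow> bool" where
  "algebraic S \<longleftrightarrow> (\<forall>M. clo S M = \<Union>{clo S B | B. B \<subseteq> M \<and> finite B})"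

definition shift_closed :: "'y tattr set set \<Rightarrow> bool" where
  "shift_closed S \<longleftrightarrow> (\<forall>M \<in> S. \<forall>i. shift M i \<in> S)"

(* A formula A \<Rightarrow> B is a pair (A, B) of finite sets *)
type_synonym 'y formula = "'y tattr set \<times> 'y tattr set"

definition is_formula :: "'y formula \<Rightarrow> bool" where
  "is_formula f \<longleftrightarrow> finite (fst f) \<and> finite (snd f)"

definition holds :: "'y tattr set \<Rightarrow> 'y formula \<Rightarrow> bool" where
  "holds M f \<longleftrightarrow> (\<forall>i. shift (fst f) i \<subseteq> M \<longrightarrow> shift (snd f) i \<subseteq> M)"

definition Mod :: "'y formula set \<Rightarrow> 'y tattr set set" where
  "Mod \<Sigma> = {M. \<forall>f \<in> \<Sigma>. holds M f}"

end

theory Submission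
  imports Defs
begin

text \<open>Take as theory all formulas \<open>B \<Rightarrow> C\<close> whose conclusion lies in the closure of
  their premise. Every member of \<open>S\<close> satisfies them, since a shifted instance of such a
  formula is an instance of the unshifted one in the shifted set, which is again in \<open>S\<close>.
  Conversely, in a model \<open>M\<close> every element of \<open>clo S M\<close> is, by algebraicity, derived
  from a finite part of \<open>M\<close> by one of these formulas, so \<open>M\<close> equals its closure.\<close>

lemma shift_shift: "shift (shift M a) b = shift M (a + b)"
  unfolding shift_def by (auto simp: add.assoc)

lemma shift_0 [simp]: "shift M 0 = M"
  unfolding shift_def by auto

lemma shift_mono: "A \<subseteq> B \<Longrightarrow> shift A i \<subseteq> shift B i"
  unfolding shift_def by auto

lemma shift_subset_iff: "shift A i \<subseteq> M \<longleftrightarrow> A \<subseteq> shift M (- i)"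
  by (metis shift_mono shift_shift shift_0 add.right_inverse add.left_inverse)

lemma clo_upper: "M \<subseteq> clo S M"
  unfolding clo_def by auto

lemma clo_least: "N \<in> S \<Longrightarrow> M \<subseteq> N \<Longrightarrow> clo S M \<subseteq> N"
  unfolding clo_def by auto

lemma clo_in: "closure_system S \<Longrightarrow> clo S M \<in> S"
  unfolding closure_system_def clo_def by auto

definition clo_theory :: "'y tattr set set \<Rightarrow> 'y formula set" where
  "clo_theory S = {(B, C) | B C. finite B \<and> finite C \<and> C \<subseteq> clo S B}"

lemma is_formula_clo_theory: "f \<in> clo_theory S \<Longrightarrow> is_formula f"
  unfolding clo_theory_def is_formula_def by auto

lemma shift_closed_subset_Mod_clo_theory:
  assumes "shift_closed S"
  shows "S \<subseteq> Mod (clo_theory S)"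
proof
  fix M assume "M \<in> S"
  have "holds M (B, C)" if "C \<subseteq> clo S B" for B C
    unfolding holds_def fst_conv snd_conv
  proof (intro allI impI)
    fix i assume "shift B i \<subseteq> M"
    moreover have "shift M (- i) \<in> S"
      using \<open>M \<in> S\<close> assms unfolding shift_closed_def by blast
    ultimately have "clo S B \<subseteq> shift M (- i)"
      by (simp add: shift_subset_iff clo_least)
    with that show "shift C i \<subseteq> M"
      by (simp add: shift_subset_iff)
  qed
  then show "M \<in> Mod (clo_theory S)"
    unfolding Mod_def clo_theory_def by auto
qed

lemma algebraic_Mod_clo_theory_subset:
  assumes "closure_system S" and "algebraic S"
  shows "Mod (clo_theory S) \<subseteq> S"
proof
  fix M assume M: "M \<in> Mod (clo_theory S)"
  have "clo S M \<subseteq> M"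
  proof
    fix x assume "x \<in> clo S M"
    then obtain B where "B \<subseteq> M" "finite B" "x \<in> clo S B"
      using \<open>algebraic S\<close> unfolding algebraic_def by blast
    then have "holds M (B, {x})"
      using M unfolding Mod_def clo_theory_def by auto
    then show "x \<in> M"
      using \<open>B \<subseteq> M\<close> unfolding holds_def by (metis fst_conv snd_conv shift_0 insert_subset)
  qed
  with clo_upper have "M = clo S M" by blast
  with clo_in[OF \<open>closure_system S\<close>, of M] show "M \<in> S" by simp
qed

theorem theorem3:
  fixes S :: "('y::finite) tattr set set"
  assumes "closure_system S" and "algebraic S" and "shift_closed S"
  shows "\<exists>\<Sigma>. (\<forall>f \<in> \<Sigma>. is_formula f) \<and> S = Mod \<Sigma>"
proof (intro exI conjI)
  show "\<forall>f \<in> clo_theory S. is_formula f"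
    using is_formula_clo_theory by blast
  show "S = Mod (clo_theory S)"
    using shift_closed_subset_Mod_clo_theory[OF assms(3)]
      algebraic_Mod_clo_theory_subset[OF assms(1,2)] by blast
qed

end
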